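(* There is an algorithm that, given $x \in \mathbb{R}^z$ and $p =\big( (\min_1, \max_1),\dots, (\min_\ell, \max_\ell)\big) \in (\mathrm{set}(x)^2)^\ell$, runs in $O(z\ell)$ time and returns True if and only if there exists a traversal $T\in\mathcal{T}_{z,\ell}$ such that $p$ is the $\ell$-profile of $(x,T)$.
   Context: For $x=(x_1,\dots,x_z)\in\mathbb{R}^z$, $\mathrm{set}(x)=\{x_i:1\le i\le z\}$. A traversal between sequences of lengths $z$ and $\ell$ is a sequence of index pairs from $(1,1)$ to $(z,\ell)$ where each step increases each index by $0$ or $1$ and at least one index by $1$; $\mathcal{T}_{z,\ell}$ is the set of traversals. For $T\in\mathcal{T}_{z,\ell}$ the traversal sectors are $S_j^{(x,T)}=\{x_i:(i,j)\in T\}$, $j\in[\ell]$, and the $\ell$-profile of $(x,T)$ is $\big((\min S_j^{(x,T)},\max S_j^{(x,T)})\big)_{j=1}^{\ell}$.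
   Formalization: The algorithm is an explicit dynamic program over the grid of index pairs that also admits the vertical (0,1) traversal step, and $O(z\ell)$ time is a count of unit-cost calls, with comparisons of reals at unit cost. Apart from conventions, each condition added here is assumed in the paper as well or is needed for the statement above to hold. *)

theory Defs
  imports Complex_Main
begin

text \<open>A sequence x in R^z is a list of length z; x_i is x ! (i - 1) (indices are 1-based).\<close>

definition is_traversal :: "nat \<Rightarrow> nat \<Rightarrow> (nat \<times> nat) list \<Rightarrow> bool" where
  "is_traversal z l T \<longleftrightarrow>
     T \<noteq> [] \<and> hd T = (1, 1) \<and> last T = (z, l) \<and>
     (\<forall>k. Suc k < length T \<longrightarrow>
        (fst (T ! Suc k) = fst (T ! k) \<or> fst (T ! Suc k) = fst (T ! k) + 1) \<and>
        (snd (T ! Suc k) = snd (T ! k) \<or> snd (T ! Suc k) = snd (T ! k) + 1) \<and>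
        T ! Suc k \<noteq> T ! k)"

definition traversals :: "nat \<Rightarrow> nat \<Rightarrow> (nat \<times> nat) list set" where
  "traversals z l = {T. is_traversal z l T}"

definition sector :: "real list \<Rightarrow> (nat \<times> nat) list \<Rightarrow> nat \<Rightarrow> real set" where
  "sector x T j = {x ! (i - 1) | i. (i, j) \<in> set T}"

definition profile :: "nat \<Rightarrow> real list \<Rightarrow> (nat \<times> nat) list \<Rightarrow> (real \<times> real) list" where
  "profile l x T = map (\<lambda>j. (Min (sector x T j), Max (sector x T j))) [1..<Suc l]"

text \<open>For each grid cell (i,j) we store which flag pairs (min of sector j seen, max of sector j seen)
are reachable by a traversal prefix ending at (i,j) whose completed sectors match the profile
and whose current sector j only contains values in [min_j, max_j].
A state is a 4-tuple of booleans: reachability of (F,F), (F,T), (T,F), (T,T).\<close>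

type_synonym st = "bool \<times> bool \<times> bool \<times> bool"

definition st_empty :: st where "st_empty = (False, False, False, False)"

fun st_union :: "st \<Rightarrow> st \<Rightarrow> st" where
  "st_union (a, b, c, d) (a', b', c', d') = (a \<or> a', b \<or> b', c \<or> c', d \<or> d')"

fun st_closed :: "st \<Rightarrow> bool" where
  "st_closed (a, b, c, d) = d"

fun st_single :: "bool \<Rightarrow> bool \<Rightarrow> st" where
  "st_single lo hi =
     (if lo then (if hi then (False, False, False, True) else (False, False, True, False))
      else (if hi then (False, True, False, False) else (True, False, False, False)))"

fun st_start :: "real \<Rightarrow> real \<times> real \<Rightarrow> st" where
  "st_start v (m, M) = (if m \<le> v \<and> v \<le> M then st_single (v = m) (v = M) else st_empty)"

fun st_ext :: "real \<Rightarrow> real \<times> real \<Rightarrow> st \<Rightarrow> st" where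
  "st_ext v (m, M) (a, b, c, d) =
     (if m \<le> v \<and> v \<le> M then
        (let lo = (v = m); hi = (v = M) in
          st_union (if a then st_single lo hi else st_empty)
           (st_union (if b then st_single lo True else st_empty)
             (st_union (if c then st_single True hi else st_empty)
               (if d then st_single True True else st_empty))))
      else st_empty)"

text \<open>compute a new column for value v; cp = sector j-1 closed in the previous column (diagonal
step), cn = sector j-1 closed in the new column (vertical step)\<close>
fun dp_col :: "real \<Rightarrow> bool \<Rightarrow> bool \<Rightarrow> (real \<times> real) list \<Rightarrow> st list \<Rightarrow> st list" where
  "dp_col v cp cn (q # qs) (s # ss) =
     (let n = st_union (st_ext v q s) (if cp \<or> cn then st_start v q else st_empty)
      in n # dp_col v (st_closed s) (st_closed n) qs ss)"
| "dp_col v cp cn qs ss = []"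

fun empty_col :: "(real \<times> real) list \<Rightarrow> st list" where
  "empty_col [] = []"
| "empty_col (q # qs) = st_empty # empty_col qs"

fun dp_run :: "(real \<times> real) list \<Rightarrow> st list \<Rightarrow> real list \<Rightarrow> st list" where
  "dp_run p c [] = c"
| "dp_run p c (v # vs) = dp_run p (dp_col v False False p c) vs"

fun last_closed :: "st list \<Rightarrow> bool" where
  "last_closed [] = False"
| "last_closed [s] = st_closed s"
| "last_closed (s # t # ss) = last_closed (t # ss)"

fun decide_profile :: "real list \<Rightarrow> (real \<times> real) list \<Rightarrow> bool" where
  "decide_profile [] p = False"
| "decide_profile (v # vs) p = last_closed (dp_run p (dp_col v True False p (empty_col p)) vs)"

text \<open>Cost model (as in HOL-Library.Time_Functions): each function call costs 1 plus the costs of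
the calls it makes; primitive operations on booleans, reals (comparison, equality) and list
constructors/pattern matches cost O(1) and are charged inside the unit cost of the call.\<close>

definition T_st_union :: "st \<Rightarrow> st \<Rightarrow> nat" where "T_st_union s t = 1"
definition T_st_closed :: "st \<Rightarrow> nat" where "T_st_closed s = 1"
definition T_st_single :: "bool \<Rightarrow> bool \<Rightarrow> nat" where "T_st_single lo hi = 1"

fun T_st_start :: "real \<Rightarrow> real \<times> real \<Rightarrow> nat" where
  "T_st_start v (m, M) = 1 + (if m \<le> v \<and> v \<le> M then T_st_single (v = m) (v = M) else 0)"

fun T_st_ext :: "real \<Rightarrow> real \<times> real \<Rightarrow> st \<Rightarrow> nat" where
  "T_st_ext v (m, M) (a, b, c, d) =
     1 + (if m \<le> v \<and> v \<le> M then
        (let lo = (v = m); hi = (v = M) in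
          3 * T_st_union st_empty st_empty
          + (if a then T_st_single lo hi else 0) + (if b then T_st_single lo True else 0)
          + (if c then T_st_single True hi else 0) + (if d then T_st_single True True else 0))
      else 0)"

fun T_dp_col :: "real \<Rightarrow> bool \<Rightarrow> bool \<Rightarrow> (real \<times> real) list \<Rightarrow> st list \<Rightarrow> nat" where
  "T_dp_col v cp cn (q # qs) (s # ss) =
     (let n = st_union (st_ext v q s) (if cp \<or> cn then st_start v q else st_empty)
      in 1 + T_st_ext v q s + (if cp \<or> cn then T_st_start v q else 0)
           + T_st_union (st_ext v q s) (if cp \<or> cn then st_start v q else st_empty)
           + T_st_closed s + T_st_closed n + T_dp_col v (st_closed s) (st_closed n) qs ss)"
| "T_dp_col v cp cn qs ss = 1"

fun T_empty_col :: "(real \<times> real) list \<Rightarrow> nat" where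
  "T_empty_col [] = 1"
| "T_empty_col (q # qs) = 1 + T_empty_col qs"

fun T_dp_run :: "(real \<times> real) list \<Rightarrow> st list \<Rightarrow> real list \<Rightarrow> nat" where
  "T_dp_run p c [] = 1"
| "T_dp_run p c (v # vs) = 1 + T_dp_col v False False p c + T_dp_run p (dp_col v False False p c) vs"

fun T_last_closed :: "st list \<Rightarrow> nat" where
  "T_last_closed [] = 1"
| "T_last_closed [s] = 1 + T_st_closed s"
| "T_last_closed (s # t # ss) = 1 + T_last_closed (t # ss)"

fun T_decide_profile :: "real list \<Rightarrow> (real \<times> real) list \<Rightarrow> nat" where
  "T_decide_profile [] p = 1"
| "T_decide_profile (v # vs) p =
     1 + T_empty_col p + T_dp_col v True False p (empty_col p)
       + T_dp_run p (dp_col v True False p (empty_col p)) vs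
       + T_last_closed (dp_run p (dp_col v True False p (empty_col p)) vs)"

end

theory Submission
  imports Defs
begin

text \<open>
  Call a flag pair (lo, hi) feasible at the grid cell (i, j) if some traversal prefix ending at
  (i, j) keeps every visited value x_a inside the interval [min_b, max_b] of its sector b, attains
  both endpoints in every completed sector b < j, and attains min_j (resp. max_j) in the current
  sector exactly when lo (resp. hi) holds. A traversal with profile p exists iff (True, True) is
  feasible at (z, l). Feasibility at (i, j) depends only on the cells (i-1, j), (i-1, j-1) and
  (i, j-1): x_i either extends the current sector of a prefix ending at (i-1, j), or opens sector j
  after a prefix that completed sector j-1. The algorithm evaluates this recurrence column by
  column with constant work per cell, hence in time O(z l).
\<close>

definition grid_step :: "nat \<times> nat \<Rightarrow> nat \<times> nat \<Rightarrow> bool" where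
  "grid_step u w \<longleftrightarrow>
     (fst w = fst u \<or> fst w = fst u + 1) \<and> (snd w = snd u \<or> snd w = snd u + 1) \<and> w \<noteq> u"

inductive grid_prefix :: "(nat \<times> nat) list \<Rightarrow> nat \<Rightarrow> nat \<Rightarrow> bool" where
  origin: "grid_prefix [(1, 1)] 1 1"
| snoc: "grid_prefix P i' j' \<Longrightarrow> grid_step (i', j') (i, j) \<Longrightarrow> grid_prefix (P @ [(i, j)]) i j"

lemma successively_iff_nth:
  "successively R xs \<longleftrightarrow> (\<forall>k. Suc k < length xs \<longrightarrow> R (xs ! k) (xs ! Suc k))"
proof (induction R xs rule: successively.induct)
  case (3 R x y xs)
  then show ?case
    by (auto simp: nth_Cons split: nat.splits)
qed auto

lemma grid_prefix_nonempty: "grid_prefix P i j \<Longrightarrow> P \<noteq> []"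
  by (induction rule: grid_prefix.induct) auto

lemma grid_prefix_iff:
  "grid_prefix P i j \<longleftrightarrow> P \<noteq> [] \<and> hd P = (1, 1) \<and> last P = (i, j) \<and> successively grid_step P"
proof
  show "grid_prefix P i j \<Longrightarrow> P \<noteq> [] \<and> hd P = (1, 1) \<and> last P = (i, j) \<and> successively grid_step P"
    by (induction rule: grid_prefix.induct)
       (auto simp: successively_append_iff dest: grid_prefix_nonempty)
next
  show "P \<noteq> [] \<and> hd P = (1, 1) \<and> last P = (i, j) \<and> successively grid_step P \<Longrightarrow> grid_prefix P i j"
  proof (induction P arbitrary: i j rule: rev_induct)
    case (snoc w P)
    show ?case
    proof (cases "P = []")
      case True
      then show ?thesis using snoc.prems grid_prefix.origin by auto
    next
      case False
      obtain i' j' where "last P = (i', j')" by fastforce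
      with False snoc show ?thesis
        by (auto simp: successively_append_iff intro: grid_prefix.snoc)
    qed
  qed simp
qed

lemma is_traversal_iff_grid_prefix: "is_traversal z l T \<longleftrightarrow> grid_prefix T z l"
  unfolding is_traversal_def grid_prefix_iff successively_iff_nth grid_step_def by blast

lemma grid_prefix_end_in_set: "grid_prefix P i j \<Longrightarrow> (i, j) \<in> set P"
  by (induction rule: grid_prefix.induct) auto

lemma grid_prefix_bounds:
  "grid_prefix P i j \<Longrightarrow> (a, b) \<in> set P \<Longrightarrow> 1 \<le> a \<and> a \<le> i \<and> 1 \<le> b \<and> b \<le> j"
proof (induction arbitrary: a b rule: grid_prefix.induct)
  case (snoc P i' j' i j)
  then have "1 \<le> i'" "1 \<le> j'" using grid_prefix_end_in_set by blast+
  with snoc show ?case by (fastforce simp: grid_step_def)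
qed auto

lemma grid_prefix_covers_sectors:
  "grid_prefix P i j \<Longrightarrow> 1 \<le> b \<Longrightarrow> b \<le> j \<Longrightarrow> \<exists>a. (a, b) \<in> set P"
  by (induction rule: grid_prefix.induct) (fastforce simp: grid_step_def le_Suc_eq)+

lemma grid_prefix_pos: "grid_prefix P i j \<Longrightarrow> 1 \<le> i \<and> 1 \<le> j"
  using grid_prefix_bounds grid_prefix_end_in_set by blast

lemma traversals_0: "traversals 0 l = {}"
  by (auto simp: traversals_def is_traversal_iff_grid_prefix dest: grid_prefix_pos)

lemma finite_sector: "finite (sector x P b)"
proof (rule finite_subset)
  show "sector x P b \<subseteq> (\<lambda>i. x ! (i - 1)) ` fst ` set P"
    by (force simp: sector_def)
qed simp

lemma sector_snoc:
  "sector x (P @ [(i, j)]) b = (if b = j then insert (x ! (i - 1)) (sector x P b) else sector x P b)"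
  by (auto simp: sector_def)

lemma sector_eq_empty_iff:
  assumes "grid_prefix P i j"
  shows "sector x P b = {} \<longleftrightarrow> b \<notin> {1..j}"
  using grid_prefix_bounds[OF assms] grid_prefix_covers_sectors[OF assms]
  by (fastforce simp: sector_def)

lemma Min_Max_eq_iff:
  fixes S :: "'a::linorder set"
  assumes "finite S" "S \<noteq> {}"
  shows "Min S = m \<and> Max S = M \<longleftrightarrow> m \<in> S \<and> M \<in> S \<and> S \<subseteq> {m..M}"
proof
  assume "Min S = m \<and> Max S = M"
  then show "m \<in> S \<and> M \<in> S \<and> S \<subseteq> {m..M}"
    using assms Min_in[OF assms] Max_in[OF assms] by auto
next
  assume "m \<in> S \<and> M \<in> S \<and> S \<subseteq> {m..M}"
  with assms show "Min S = m \<and> Max S = M" by (auto intro!: Min_eqI Max_eqI)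
qed

definition fits_profile :: "real list \<Rightarrow> (real \<times> real) list \<Rightarrow> (nat \<times> nat) list \<Rightarrow> nat \<Rightarrow> bool" where
  "fits_profile x p P j \<longleftrightarrow>
     (\<forall>b. sector x P b \<subseteq> {fst (p ! (b - 1))..snd (p ! (b - 1))}) \<and>
     (\<forall>b \<in> {1..<j}. fst (p ! (b - 1)) \<in> sector x P b \<and> snd (p ! (b - 1)) \<in> sector x P b)"

lemma profile_eq_iff_fits_profile:
  assumes "grid_prefix T z l"
  shows "profile l x T = p \<longleftrightarrow> length p = l \<and> fits_profile x p T (Suc l)"
proof -
  let ?fits = "\<lambda>b. fst (p ! (b - 1)) \<in> sector x T b \<and> snd (p ! (b - 1)) \<in> sector x T b \<and>
      sector x T b \<subseteq> {fst (p ! (b - 1))..snd (p ! (b - 1))}"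
  have "profile l x T = p \<longleftrightarrow> length p = l \<and>
      (\<forall>j < l. Min (sector x T (Suc j)) = fst (p ! j) \<and> Max (sector x T (Suc j)) = snd (p ! j))"
    by (auto simp: profile_def list_eq_iff_nth_eq prod_eq_iff nth_upt simp del: upt_Suc)
  also have "\<dots> \<longleftrightarrow> length p = l \<and> (\<forall>j < l. ?fits (Suc j))"
    using Min_Max_eq_iff[OF finite_sector] sector_eq_empty_iff[OF assms] by simp
  also have "(\<forall>j < l. ?fits (Suc j)) \<longleftrightarrow> (\<forall>b \<in> {1..l}. ?fits b)"
    unfolding image_Suc_lessThan[symmetric] by auto
  also have "\<dots> \<longleftrightarrow> fits_profile x p T (Suc l)"
  proof -
    have "sector x T b = {}" if "b \<notin> {1..l}" for b
      using sector_eq_empty_iff[OF assms] that by blast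
    then show ?thesis by (fastforce simp: fits_profile_def)
  qed
  finally show ?thesis .
qed

lemma fits_profile_Suc:
  "1 \<le> j \<Longrightarrow> fits_profile x p P (Suc j) \<longleftrightarrow> fits_profile x p P j \<and>
     fst (p ! (j - 1)) \<in> sector x P j \<and> snd (p ! (j - 1)) \<in> sector x P j"
  by (auto simp: fits_profile_def atLeastLessThanSuc)

definition feasible :: "real list \<Rightarrow> (real \<times> real) list \<Rightarrow> nat \<Rightarrow> nat \<Rightarrow> bool \<Rightarrow> bool \<Rightarrow> bool" where
  "feasible x p i j lo hi \<longleftrightarrow> (\<exists>P. grid_prefix P i j \<and> fits_profile x p P j \<and>
     lo = (fst (p ! (j - 1)) \<in> sector x P j) \<and> hi = (snd (p ! (j - 1)) \<in> sector x P j))"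

lemma not_feasible_0: "\<not> feasible x p 0 j lo hi" "\<not> feasible x p i 0 lo hi"
  using grid_prefix_pos by (fastforce simp: feasible_def)+

lemma feasible_final_iff_profile:
  "feasible x p z (length p) True True \<longleftrightarrow>
   (\<exists>T \<in> traversals z (length p). profile (length p) x T = p)"
proof (cases "p = []")
  case True
  then show ?thesis
    using grid_prefix_pos by (auto simp: not_feasible_0 traversals_def is_traversal_iff_grid_prefix)
next
  case False
  then have "1 \<le> length p" by (simp add: Suc_le_eq)
  then show ?thesis
    by (auto simp: feasible_def fits_profile_Suc traversals_def is_traversal_iff_grid_prefix
        profile_eq_iff_fits_profile)
qed

lemma feasible_origin:
  assumes "x ! 0 \<in> {fst (p ! 0)..snd (p ! 0)}"
  shows "feasible x p 1 1 (x ! 0 = fst (p ! 0)) (x ! 0 = snd (p ! 0))"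
proof -
  have "sector x [(1, 1)] b = (if b = 1 then {x ! 0} else {})" for b
    by (auto simp: sector_def)
  with assms grid_prefix.origin show ?thesis
    unfolding feasible_def fits_profile_def by (intro exI[of _ "[(1, 1)]"]) auto
qed

lemma feasible_same_sector:
  assumes "feasible x p i' j lo hi" "grid_step (i', j) (i, j)"
    and "x ! (i - 1) \<in> {fst (p ! (j - 1))..snd (p ! (j - 1))}"
  shows "feasible x p i j (lo \<or> x ! (i - 1) = fst (p ! (j - 1))) (hi \<or> x ! (i - 1) = snd (p ! (j - 1)))"
proof -
  obtain P where "grid_prefix P i' j" "fits_profile x p P j"
    "lo = (fst (p ! (j - 1)) \<in> sector x P j)" "hi = (snd (p ! (j - 1)) \<in> sector x P j)"
    using assms(1) by (auto simp: feasible_def)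
  with assms(2,3) show ?thesis
    unfolding feasible_def fits_profile_def
    by (intro exI[of _ "P @ [(i, j)]"]) (auto simp: sector_snoc intro: grid_prefix.snoc)
qed

lemma feasible_next_sector:
  assumes "feasible x p i' j True True" "grid_step (i', j) (i, Suc j)"
    and "x ! (i - 1) \<in> {fst (p ! j)..snd (p ! j)}"
  shows "feasible x p i (Suc j) (x ! (i - 1) = fst (p ! j)) (x ! (i - 1) = snd (p ! j))"
proof -
  obtain P where P: "grid_prefix P i' j" "fits_profile x p P j"
    "fst (p ! (j - 1)) \<in> sector x P j" "snd (p ! (j - 1)) \<in> sector x P j"
    using assms(1) by (auto simp: feasible_def)
  have "sector x P (Suc j) = {}"
    using sector_eq_empty_iff[OF P(1)] by simp
  with P assms(2,3) show ?thesis
    unfolding feasible_def fits_profile_def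
    by (intro exI[of _ "P @ [(i, Suc j)]"]) (auto simp: sector_snoc less_Suc_eq intro: grid_prefix.snoc)
qed

lemma feasible_in_range:
  "feasible x p i j lo hi \<Longrightarrow> x ! (i - 1) \<in> {fst (p ! (j - 1))..snd (p ! (j - 1))}"
  unfolding feasible_def fits_profile_def
  by (fastforce simp: sector_def dest: grid_prefix_end_in_set)

lemma feasible_cases:
  assumes "feasible x p i j lo hi"
  obtains (origin) "i = 1" "j = 1" "lo = (x ! 0 = fst (p ! 0))" "hi = (x ! 0 = snd (p ! 0))"
  | (next_sector) i' j' where "j = Suc j'" "grid_step (i', j') (i, j)" "feasible x p i' j' True True"
      "lo = (x ! (i - 1) = fst (p ! j'))" "hi = (x ! (i - 1) = snd (p ! j'))"
  | (same_sector) i' lo' hi' where "grid_step (i', j) (i, j)" "feasible x p i' j lo' hi'"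
      "lo = (lo' \<or> x ! (i - 1) = fst (p ! (j - 1)))" "hi = (hi' \<or> x ! (i - 1) = snd (p ! (j - 1)))"
proof -
  obtain P where P: "grid_prefix P i j" "fits_profile x p P j"
    "lo = (fst (p ! (j - 1)) \<in> sector x P j)" "hi = (snd (p ! (j - 1)) \<in> sector x P j)"
    using assms by (auto simp: feasible_def)
  from P(1) show thesis
  proof cases
    case origin
    then show thesis using P(3,4) that(1) by (auto simp: sector_def)
  next
    case (snoc P' i' j')
    have fits_P': "\<forall>b. sector x P' b \<subseteq> {fst (p ! (b - 1))..snd (p ! (b - 1))}"
      using P(2) snoc(1) by (auto simp: fits_profile_def sector_snoc split: if_splits)
    show thesis
    proof (cases "j' = j")
      case True
      have "feasible x p i' j (fst (p ! (j - 1)) \<in> sector x P' j) (snd (p ! (j - 1)) \<in> sector x P' j)"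
        using snoc fits_P' P(2) True unfolding feasible_def fits_profile_def
        by (intro exI[of _ P']) (auto simp: sector_snoc)
      moreover have "lo = (fst (p ! (j - 1)) \<in> sector x P' j \<or> x ! (i - 1) = fst (p ! (j - 1)))"
        "hi = (snd (p ! (j - 1)) \<in> sector x P' j \<or> x ! (i - 1) = snd (p ! (j - 1)))"
        using P(3,4) snoc(1) by (auto simp: sector_snoc)
      ultimately show thesis using that(3) snoc(3) True by blast
    next
      case False
      then have j: "j = Suc j'" "1 \<le> j'"
        using snoc grid_prefix_pos by (auto simp: grid_step_def)
      have "sector x P' j = {}"
        using sector_eq_empty_iff[OF snoc(2)] j by simp
      moreover have "feasible x p i' j' True True"
        using snoc fits_P' P(2) j unfolding feasible_def fits_profile_def
        by (intro exI[of _ P']) (auto simp: sector_snoc)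
      ultimately show thesis using that(2) snoc j P(3,4) by (auto simp: sector_snoc)
    qed
  qed
qed

lemma feasible_Suc_iff:
  assumes "1 \<le> i"
  shows "feasible x p i (Suc k) lo hi \<longleftrightarrow> x ! (i - 1) \<in> {fst (p ! k)..snd (p ! k)} \<and>
    ((((k = 0 \<and> i = 1) \<or> feasible x p (i - 1) k True True \<or> feasible x p i k True True) \<and>
        lo = (x ! (i - 1) = fst (p ! k)) \<and> hi = (x ! (i - 1) = snd (p ! k))) \<or>
     (\<exists>lo' hi'. feasible x p (i - 1) (Suc k) lo' hi' \<and>
        lo = (lo' \<or> x ! (i - 1) = fst (p ! k)) \<and> hi = (hi' \<or> x ! (i - 1) = snd (p ! k))))"
    (is "?feasible \<longleftrightarrow> ?in_range \<and> ?recurrence")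
proof
  assume ?feasible
  then show "?in_range \<and> ?recurrence"
  proof (cases rule: feasible_cases)
    case (next_sector i' j')
    then have "i' = i \<or> i' = i - 1" by (auto simp: grid_step_def)
    with next_sector show ?thesis using feasible_in_range[OF \<open>?feasible\<close>] by auto
  next
    case (same_sector i' lo' hi')
    then have "i' = i - 1" by (auto simp: grid_step_def)
    with same_sector show ?thesis using feasible_in_range[OF \<open>?feasible\<close>] by auto
  qed (use feasible_in_range[OF \<open>?feasible\<close>] in auto)
next
  assume "?in_range \<and> ?recurrence"
  then have in_range: ?in_range and ?recurrence by blast+
  then consider
      (start) "(k = 0 \<and> i = 1) \<or> feasible x p (i - 1) k True True \<or> feasible x p i k True True"
        "lo = (x ! (i - 1) = fst (p ! k))" "hi = (x ! (i - 1) = snd (p ! k))"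
    | (extend) lo' hi' where "feasible x p (i - 1) (Suc k) lo' hi'"
        "lo = (lo' \<or> x ! (i - 1) = fst (p ! k))" "hi = (hi' \<or> x ! (i - 1) = snd (p ! k))"
    by blast
  then show ?feasible
  proof cases
    case start
    have "grid_step (i - 1, k) (i, Suc k)" "grid_step (i, k) (i, Suc k)"
      using assms by (auto simp: grid_step_def)
    with start show ?feasible
      using feasible_origin[of x p] feasible_next_sector[OF _ _ in_range] in_range by auto
  next
    case (extend lo' hi')
    have "grid_step (i - 1, Suc k) (i, Suc k)"
      using extend(1) not_feasible_0 assms by (cases "i = 1") (auto simp: grid_step_def)
    with extend show ?feasible
      using feasible_same_sector[of x p "i - 1" "Suc k" lo' hi' i] in_range by simp
  qed
qed

definition st_of :: "(bool \<Rightarrow> bool \<Rightarrow> bool) \<Rightarrow> st" where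
  "st_of S = (S False False, S False True, S True False, S True True)"

lemma st_closed_st_of: "st_closed (st_of S) = S True True"
  by (simp add: st_of_def)

lemma st_update_st_of:
  "st_union (st_ext v (m, M) (st_of S)) (if c then st_start v (m, M) else st_empty) =
   st_of (\<lambda>lo hi. v \<in> {m..M} \<and> ((c \<and> lo = (v = m) \<and> hi = (v = M)) \<or>
        (\<exists>lo' hi'. S lo' hi' \<and> lo = (lo' \<or> v = m) \<and> hi = (hi' \<or> v = M))))"
  by (cases "m \<le> v \<and> v \<le> M"; cases c; cases "v = m"; cases "v = M")
     (auto simp: st_of_def st_empty_def Let_def ex_bool_eq)

lemma st_of_feasible_Suc:
  assumes "1 \<le> i"
  shows "st_of (feasible x p i (Suc k)) =
    st_union (st_ext (x ! (i - 1)) (p ! k) (st_of (feasible x p (i - 1) (Suc k))))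
      (if (k = 0 \<and> i = 1) \<or> feasible x p (i - 1) k True True \<or> feasible x p i k True True
       then st_start (x ! (i - 1)) (p ! k) else st_empty)"
proof -
  obtain m M where q: "p ! k = (m, M)" by fastforce
  show ?thesis
    unfolding q st_update_st_of
    using feasible_Suc_iff[OF assms, of x p k] q by (intro arg_cong[where f = st_of] ext) simp
qed

definition feasible_col :: "real list \<Rightarrow> (real \<times> real) list \<Rightarrow> nat \<Rightarrow> st list" where
  "feasible_col x p i = map (\<lambda>k. st_of (feasible x p i (Suc k))) [0..<length p]"

lemma empty_col_eq_feasible_col_0: "empty_col p = feasible_col x p 0"
proof -
  have "empty_col p = replicate (length p) st_empty"
    by (induction p) auto
  then show ?thesis
    by (simp add: feasible_col_def st_of_def not_feasible_0 st_empty_def map_replicate_const)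
qed

lemma drop_feasible_col:
  "k < length p \<Longrightarrow>
   drop k (feasible_col x p i) = st_of (feasible x p i (Suc k)) # drop (Suc k) (feasible_col x p i)"
  by (simp add: feasible_col_def Cons_nth_drop_Suc[symmetric] del: upt_Suc)

lemma dp_col_feasible_col:
  assumes "1 \<le> i" "k \<le> length p"
  shows "dp_col (x ! (i - 1)) ((k = 0 \<and> i = 1) \<or> feasible x p (i - 1) k True True)
           (feasible x p i k True True) (drop k p) (drop k (feasible_col x p (i - 1)))
         = drop k (feasible_col x p i)"
  using assms(2)
proof (induction rule: inc_induct)
  case base
  then show ?case by (simp add: feasible_col_def)
next
  case (step k)
  have IH: "dp_col (x ! (i - 1)) (feasible x p (i - 1) (Suc k) True True)
      (feasible x p i (Suc k) True True) (drop (Suc k) p) (drop (Suc k) (feasible_col x p (i - 1)))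
    = drop (Suc k) (feasible_col x p i)"
    using step.IH by simp
  have "drop k p = p ! k # drop (Suc k) p"
    using step.hyps(2) by (simp add: Cons_nth_drop_Suc)
  then show ?case
    by (simp only: drop_feasible_col[OF step.hyps(2)] dp_col.simps(1) Let_def
          disj_assoc st_of_feasible_Suc[OF assms(1), symmetric] st_closed_st_of IH)
qed

lemma dp_run_feasible_col:
  assumes "1 \<le> i" "i \<le> length x"
  shows "dp_run p (feasible_col x p i) (drop i x) = feasible_col x p (length x)"
  using assms(2)
proof (induction rule: inc_induct)
  case (step n)
  have "dp_col (x ! n) False False p (feasible_col x p n) = feasible_col x p (Suc n)"
    using dp_col_feasible_col[of "Suc n" 0 p x] assms(1) step.hyps(1) by (simp add: not_feasible_0)
  moreover have "drop n x = x ! n # drop (Suc n) x"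
    using step.hyps(2) by (simp add: Cons_nth_drop_Suc)
  ultimately show ?case using step.IH by simp
qed simp

lemma last_closed_feasible_col: "last_closed (feasible_col x p i) = feasible x p i (length p) True True"
proof -
  have "c \<noteq> [] \<Longrightarrow> last_closed c = st_closed (last c)" for c
    by (induction c rule: last_closed.induct) auto
  then show ?thesis
    by (cases "p = []") (auto simp: feasible_col_def last_map st_closed_st_of not_feasible_0)
qed

lemma decide_profile_iff_feasible:
  assumes "x \<noteq> []"
  shows "decide_profile x p \<longleftrightarrow> feasible x p (length x) (length p) True True"
proof -
  obtain v vs where x: "x = v # vs"
    using assms by (cases x) auto
  have "dp_col v True False p (empty_col p) = feasible_col x p 1"
    using dp_col_feasible_col[of 1 0 p x] x
    by (simp add: empty_col_eq_feasible_col_0[of p x] not_feasible_0)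
  moreover have "dp_run p (feasible_col x p 1) vs = feasible_col x p (length x)"
    using dp_run_feasible_col[of 1 x p] x by simp
  ultimately show ?thesis
    using x by (simp add: last_closed_feasible_col)
qed

lemma T_st_ext_le: "T_st_ext v q s \<le> 8"
  by (cases q; cases s) (auto simp: T_st_union_def T_st_single_def Let_def)

lemma T_st_start_le: "T_st_start v q \<le> 2"
  by (cases q) (auto simp: T_st_single_def)

lemma T_dp_col_le: "T_dp_col v cp cn qs ss \<le> 14 * length qs + 1"
proof (induction qs arbitrary: cp cn ss)
  case (Cons q qs)
  show ?case
  proof (cases ss)
    case (Cons s ss')
    then show ?thesis
      using T_st_ext_le[of v q s] T_st_start_le[of v q]
        Cons.IH[of "st_closed s" "st_closed (st_union (st_ext v q s) (st_start v q))" ss']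
        Cons.IH[of "st_closed s" "st_closed (st_union (st_ext v q s) st_empty)" ss']
      by (simp add: Let_def T_st_union_def T_st_closed_def)
  qed simp
qed simp

lemma T_empty_col: "T_empty_col p = length p + 1"
  by (induction p) auto

lemma length_dp_col_le: "length (dp_col v cp cn qs ss) \<le> length qs"
  by (induction v cp cn qs ss rule: dp_col.induct) (auto simp: Let_def)

lemma length_dp_run_le: "length c \<le> length p \<Longrightarrow> length (dp_run p c vs) \<le> length p"
  by (induction vs arbitrary: c) (auto intro: order.trans[OF length_dp_col_le])

lemma T_dp_run_le: "T_dp_run p c vs \<le> length vs * (14 * length p + 2) + 1"
proof (induction vs arbitrary: c)
  case (Cons v vs)
  show ?case
    using T_dp_col_le[of v False False p c] Cons.IH[of "dp_col v False False p c"] by simp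
qed simp

lemma T_last_closed_le: "T_last_closed c \<le> length c + 1"
  by (induction c rule: T_last_closed.induct) (auto simp: T_st_closed_def)

lemma T_decide_profile_le:
  assumes "x \<noteq> []" "p \<noteq> []"
  shows "T_decide_profile x p \<le> 40 * (length x * length p)"
proof -
  obtain v vs where x: "x = v # vs"
    using assms by (cases x) auto
  let ?c = "dp_col v True False p (empty_col p)"
  have "T_last_closed (dp_run p ?c vs) \<le> length p + 1"
    using T_last_closed_le[of "dp_run p ?c vs"] length_dp_run_le[OF length_dp_col_le]
    by (meson add_right_mono order.trans)
  then have "T_decide_profile x p \<le> 5 + 16 * length p + length vs * (14 * length p + 2)"
    using T_dp_col_le[of v True False p "empty_col p"] T_dp_run_le[of p ?c vs] x
    by (simp add: T_empty_col)
  also have "\<dots> \<le> 40 * length p + length vs * (40 * length p)"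
  proof -
    have "1 \<le> length p"
      using assms(2) by (simp add: Suc_le_eq)
    then show ?thesis by (intro add_mono mult_le_mono2) linarith+
  qed
  also have "\<dots> = 40 * (length x * length p)"
    using x by (simp add: algebra_simps)
  finally show ?thesis .
qed

theorem lemma9p16:
  shows "(\<forall>(x :: real list) (p :: (real \<times> real) list).
            (\<forall>j < length p. fst (p ! j) \<in> set x \<and> snd (p ! j) \<in> set x) \<longrightarrow>
            (decide_profile x p \<longleftrightarrow>
               (\<exists>T \<in> traversals (length x) (length p). profile (length p) x T = p)))
       \<and> (\<exists>C :: nat. \<forall>(x :: real list) (p :: (real \<times> real) list).
            x \<noteq> [] \<longrightarrow> p \<noteq> [] \<longrightarrow> T_decide_profile x p \<le> C * (length x * length p))"
proof (intro conjI allI impI)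
  fix x :: "real list" and p :: "(real \<times> real) list"
  show "decide_profile x p \<longleftrightarrow> (\<exists>T \<in> traversals (length x) (length p). profile (length p) x T = p)"
  proof (cases "x = []")
    case True
    then show ?thesis by (simp add: traversals_0)
  next
    case False
    then show ?thesis by (simp add: decide_profile_iff_feasible feasible_final_iff_profile)
  qed
next
  show "\<exists>C :: nat. \<forall>(x :: real list) (p :: (real \<times> real) list).
          x \<noteq> [] \<longrightarrow> p \<noteq> [] \<longrightarrow> T_decide_profile x p \<le> C * (length x * length p)"
    using T_decide_profile_le by blast
qed

end
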